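(* Assume that $\bar r^j \in \mathrm{recc}(C)$ for every $j \in N_0$. Then every $x \in P^B \setminus C$ satisfies at least one of the two inequalities $$\sum_{j \in N} \frac{x_j}{\alpha_j} \le 1 \qquad\text{or}\qquad \sum_{j \in N} \frac{x_j}{\beta_j} \ge 1 .$$
   Context: Let $A\in\mathbb{R}^{m\times n}$ have full row rank, $b\in\mathbb{R}^m$, and $P=\{x\in\mathbb{R}^n_+ : Ax=b\}$. Let $C\subseteq\mathbb{R}^n$ be an open convex set. Fix a basis $B\subseteq\{1,\dots,n\}$ of $P$ with nonbasic index set $N=\{1,\dots,n\}\setminus B$. Write $P=\{x\in\mathbb{R}^n : x_i=\bar b_i-\sum_{j\in N}\bar a_{ij}x_j\ (i\in B),\ x_j\ge 0\ (j=1,\dots,n)\}$ for some $\bar a\in\mathbb{R}^{|B|\times|N|}$ and $\bar b\in\mathbb{R}^{|B|}_+$. The basic solution $\bar x$ is given by $\bar x_i=\bar b_i$ for $i\in B$ and $\bar x_i=0$ for $i\in N$. The set $P^B\supseteq P$ is obtained from this description by dropping the constraints $x_i\ge0$ for $i\in B$. For $j\in N$ let $\bar r^j\in\mathbb{R}^n$ be given by $\bar r^j_k=-\bar a_{kj}$ for $k\in B$, $\bar r^j_j=1$, and $\bar r^j_k=0$ for $k\in N\setminus\{j\}$. Then $P^B=\{\bar x+\sum_{j\in N}x_j\bar r^j : x_j\ge 0\ \forall j\in N\}$. For $x\in P^B$, the coordinates $x_j$ ($j\in N$) are exactly the coefficients in this representation. It is assumed that $\bar x\notin\mathrm{cl}(C)$.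 For $j\in N$ let $\alpha_j=\inf\{\lambda\ge0:\bar x+\lambda\bar r^j\in C\}$ and $\beta_j=\sup\{\lambda\ge0:\bar x+\lambda\bar r^j\in C\}$. By convention, $\alpha_j=+\infty$ and $\beta_j=-\infty$ if the halfline $\{\bar x+\lambda\bar r^j:\lambda\ge0\}$ does not intersect $C$. The set $N$ is partitioned into - $N_0=\{j\in N:\alpha_j=+\infty,\ \beta_j=-\infty\}$, - $N_1=\{j\in N:\alpha_j\in(0,+\infty),\ \beta_j=+\infty\}$, - $N_2=\{j\in N:\alpha_j\in(0,+\infty),\ \beta_j\in(\alpha_j,+\infty)\}$. We use the convention $t/\pm\infty=0$. For a set $K\subseteq\mathbb{R}^n$, $\mathrm{recc}(K)=\{d\in\mathbb{R}^n: x+\lambda d\in K\ \forall x\in K,\ \forall\lambda\ge0\}$ denotes its recession cone. *)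

theory Defs
  imports "HOL-Analysis.Analysis"
begin

text \<open>Coordinates are indexed by a finite type 'n (playing the role of {1..n});
  rows of A by a finite type 'm. The basis B is a set of indices, N = UNIV - B.\<close>

definition Pset :: "real^'n^'m \<Rightarrow> real^'m \<Rightarrow> (real^'n) set" where
  "Pset A b = {x. A *v x = b \<and> (\<forall>j. 0 \<le> x $ j)}"

definition is_basis :: "real^'n^'m \<Rightarrow> 'n set \<Rightarrow> bool" where
  "is_basis A B \<longleftrightarrow> card B = CARD('m) \<and> inj_on (\<lambda>j. column j A) B
      \<and> independent ((\<lambda>j. column j A) ` B)"

definition basic_sol :: "'n set \<Rightarrow> ('n \<Rightarrow> real) \<Rightarrow> real^'n" where
  "basic_sol B bb = (\<chi> i. if i \<in> B then bb i else 0)"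

definition ray :: "'n set \<Rightarrow> ('n \<Rightarrow> 'n \<Rightarrow> real) \<Rightarrow> 'n \<Rightarrow> real^'n" where
  "ray B ab j = (\<chi> k. if k \<in> B then - ab k j else if k = j then 1 else 0)"

definition PB :: "'n set \<Rightarrow> ('n \<Rightarrow> 'n \<Rightarrow> real) \<Rightarrow> ('n \<Rightarrow> real) \<Rightarrow> (real^'n) set" where
  "PB B ab bb = {x. (\<forall>i\<in>B. x $ i = bb i - (\<Sum>j\<in>UNIV - B. ab i j * x $ j))
                   \<and> (\<forall>j\<in>UNIV - B. 0 \<le> x $ j)}"

text \<open>alpha = inf, beta = sup of the step lengths along the ray that land in C;
  in ereal, Inf {} = +infinity and Sup {} = -infinity, matching the convention.\<close>

definition alpha :: "(real^'n) set \<Rightarrow> real^'n \<Rightarrow> real^'n \<Rightarrow> ereal" where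
  "alpha C x0 r = Inf (ereal ` {l. 0 \<le> l \<and> x0 + l *\<^sub>R r \<in> C})"

definition beta :: "(real^'n) set \<Rightarrow> real^'n \<Rightarrow> real^'n \<Rightarrow> ereal" where
  "beta C x0 r = Sup (ereal ` {l. 0 \<le> l \<and> x0 + l *\<^sub>R r \<in> C})"

definition ediv :: "real \<Rightarrow> ereal \<Rightarrow> real" where
  "ediv t a = (if \<bar>a\<bar> = \<infinity> then 0 else t / real_of_ereal a)"

definition recc :: "(real^'n) set \<Rightarrow> (real^'n) set" where
  "recc K = {d. \<forall>x\<in>K. \<forall>l\<ge>0. x + l *\<^sub>R d \<in> K}"

end

(* Write x = xbar + sum_j x_j r^j. For a ray that meets C, the steps l with xbar + l r^j in C
   form an interval whose endpoints are alpha_j > 0 (as xbar is not in the closure of C) and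
   beta_j, open because C is. If both inequalities fail, sum_j x_j/beta_j < 1 < sum_j x_j/alpha_j,
   so there are weights mu_j summing to one with x_j/beta_j < mu_j < x_j/alpha_j. Then the part
   of x along these rays is the convex combination sum_j mu_j (xbar + (x_j/mu_j) r^j) of points
   of C, and adding the remaining rays, which are recession directions of C, keeps x in C. *)

theory Submission
  imports Defs
begin

definition steps :: "'a::real_vector set \<Rightarrow> 'a \<Rightarrow> 'a \<Rightarrow> real set" where
  "steps C x0 r = {l. 0 \<le> l \<and> x0 + l *\<^sub>R r \<in> C}"

lemma alpha_eq_Inf_steps: "alpha C x0 r = Inf (ereal ` steps C x0 r)"
  by (simp add: alpha_def steps_def)

lemma beta_eq_Sup_steps: "beta C x0 r = Sup (ereal ` steps C x0 r)"
  by (simp add: beta_def steps_def)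

lemma convex_steps:
  fixes C :: "'a::real_vector set"
  assumes "convex C"
  shows "convex (steps C x0 r)"
proof (rule convexI)
  fix l1 l2 u v :: real
  assume l: "l1 \<in> steps C x0 r" "l2 \<in> steps C x0 r"
    and uv: "0 \<le> u" "0 \<le> v" "u + v = 1"
  have "u *\<^sub>R (x0 + l1 *\<^sub>R r) + v *\<^sub>R (x0 + l2 *\<^sub>R r) = (u + v) *\<^sub>R x0 + (u * l1 + v * l2) *\<^sub>R r"
    by (simp add: algebra_simps)
  then have "x0 + (u * l1 + v * l2) *\<^sub>R r = u *\<^sub>R (x0 + l1 *\<^sub>R r) + v *\<^sub>R (x0 + l2 *\<^sub>R r)"
    using uv(3) by simp
  moreover have "u *\<^sub>R (x0 + l1 *\<^sub>R r) + v *\<^sub>R (x0 + l2 *\<^sub>R r) \<in> C"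
    using assms l uv by (intro convexD) (auto simp: steps_def)
  moreover have "0 \<le> u * l1 + v * l2"
    using l uv by (simp add: steps_def)
  ultimately show "u *\<^sub>R l1 + v *\<^sub>R l2 \<in> steps C x0 r"
    by (simp add: steps_def)
qed

lemma steps_between:
  fixes C :: "'a::real_vector set"
  assumes "convex C" "l1 \<in> steps C x0 r" "l2 \<in> steps C x0 r" "l1 \<le> l" "l \<le> l2"
  shows "l \<in> steps C x0 r"
proof -
  have "is_interval (steps C x0 r)"
    using convex_steps[OF assms(1)] by (simp add: is_interval_convex_1)
  then show ?thesis
    using assms(2-) unfolding is_interval_1 by blast
qed

lemma steps_bounded_away_from_zero:
  fixes C :: "'a::real_normed_vector set"
  assumes "x0 \<notin> closure C" "r \<noteq> 0"
  obtains c where "c > 0" "\<And>l. l \<in> steps C x0 r \<Longrightarrow> c \<le> l"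
proof -
  obtain e where e: "e > 0" "\<And>y. y \<in> C \<Longrightarrow> e \<le> dist y x0"
    using assms(1) unfolding closure_approachable by (auto simp: not_less)
  show ?thesis
  proof (rule that[of "e / norm r"])
    show "e / norm r > 0" using e assms(2) by simp
    fix l assume "l \<in> steps C x0 r"
    then have "e \<le> l * norm r" using e(2)[of "x0 + l *\<^sub>R r"] by (simp add: steps_def dist_norm)
    then show "e / norm r \<le> l" using assms(2) by (simp add: field_simps)
  qed
qed

lemma steps_extend_right:
  fixes C :: "'a::real_normed_vector set"
  assumes "open C" "l \<in> steps C x0 r"
  obtains d where "d > 0" "l + d \<in> steps C x0 r"
proof -
  have "open ((\<lambda>l. x0 + l *\<^sub>R r) -` C)"
    using assms(1) by (intro continuous_open_vimage) (auto intro!: continuous_intros)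
  moreover have "l \<in> (\<lambda>l. x0 + l *\<^sub>R r) -` C" using assms(2) by (simp add: steps_def)
  ultimately obtain e where "e > 0" "ball l e \<subseteq> (\<lambda>l. x0 + l *\<^sub>R r) -` C"
    by (meson open_contains_ball)
  then have "e / 2 > 0" "l + e / 2 \<in> steps C x0 r"
    using assms(2) by (auto simp: steps_def dist_real_def subset_eq)
  then show ?thesis using that by blast
qed

lemma alpha_beta_empty_steps:
  assumes "steps C x0 r = {}"
  shows "alpha C x0 r = \<infinity>" "beta C x0 r = - \<infinity>"
  using assms by (simp_all add: alpha_eq_Inf_steps beta_eq_Sup_steps top_ereal_def bot_ereal_def)

lemma alpha_beta_nonempty_steps:
  fixes C :: "(real^'n) set"
  assumes "open C" "convex C" "x0 \<notin> closure C" "r \<noteq> 0" "steps C x0 r \<noteq> {}"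
  obtains a where "0 < a" "alpha C x0 r = ereal a" "alpha C x0 r < beta C x0 r"
    "\<And>l. alpha C x0 r < ereal l \<Longrightarrow> ereal l < beta C x0 r \<Longrightarrow> x0 + l *\<^sub>R r \<in> C"
proof -
  let ?S = "steps C x0 r"
  obtain c where c: "c > 0" "\<And>l. l \<in> ?S \<Longrightarrow> c \<le> l"
    using steps_bounded_away_from_zero[OF assms(3,4)] by blast
  obtain l0 where l0: "l0 \<in> ?S" using assms(5) by blast
  obtain d where d: "d > 0" "l0 + d \<in> ?S" using steps_extend_right[OF assms(1) l0] by blast
  have "ereal c \<le> alpha C x0 r" "alpha C x0 r \<le> ereal l0"
    using c l0 by (auto simp: alpha_eq_Inf_steps intro!: Inf_greatest Inf_lower)
  then obtain a where a: "alpha C x0 r = ereal a" "c \<le> a"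
    by (cases "alpha C x0 r") auto
  note \<open>alpha C x0 r \<le> ereal l0\<close>
  also have "ereal l0 < ereal (l0 + d)"
    using d(1) by simp
  also have "\<dots> \<le> beta C x0 r"
    using d(2) by (auto simp: beta_eq_Sup_steps intro!: Sup_upper)
  finally have "alpha C x0 r < beta C x0 r" .
  moreover have "x0 + l *\<^sub>R r \<in> C"
    if lower: "alpha C x0 r < ereal l" and upper: "ereal l < beta C x0 r" for l
  proof -
    obtain l1 where "l1 \<in> ?S" "l1 < l"
      using lower unfolding alpha_eq_Inf_steps Inf_less_iff by auto
    moreover obtain l2 where "l2 \<in> ?S" "l < l2"
      using upper unfolding beta_eq_Sup_steps less_Sup_iff by auto
    ultimately have "l \<in> ?S"
      using steps_between[OF assms(2)] by (meson less_imp_le)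
    then show ?thesis by (simp add: steps_def)
  qed
  ultimately show ?thesis
    using that a c(1) by auto
qed

lemma ediv_ereal [simp]: "ediv t (ereal a) = t / a"
  by (simp add: ediv_def)

lemma ediv_zero_left [simp]: "ediv 0 a = 0"
  by (simp add: ediv_def)

lemma ediv_infinity [simp]: "ediv t \<infinity> = 0" "ediv t (- \<infinity>) = 0"
  by (simp_all add: ediv_def)

lemma ediv_reciprocal_interval:
  assumes "0 < t" "0 < a" "ereal a < be"
  shows "0 \<le> ediv t be" "ediv t be < t / a"
    and "ediv t be < m \<Longrightarrow> m < t / a \<Longrightarrow> ereal a < ereal (t / m) \<and> ereal (t / m) < be"
proof -
  show "0 \<le> ediv t be" "ediv t be < t / a"
    using assms by (cases be; simp add: frac_less2)+
  assume m: "ediv t be < m" "m < t / a"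
  have "0 < m"
    using m(1) \<open>0 \<le> ediv t be\<close> by linarith
  then have "a < t / m"
    using m(2) assms(2) by (simp add: field_simps)
  moreover have "ereal (t / m) < be"
    using m(1) assms \<open>0 < m\<close> by (cases be) (auto simp: field_simps)
  ultimately show "ereal a < ereal (t / m) \<and> ereal (t / m) < be"
    by simp
qed

lemma sum_eq_one_between:
  fixes lo hi :: "'i \<Rightarrow> real"
  assumes "\<And>j. j \<in> J \<Longrightarrow> lo j < hi j" "sum lo J < 1" "1 < sum hi J"
  obtains mu where "\<And>j. j \<in> J \<Longrightarrow> lo j < mu j \<and> mu j < hi j" "sum mu J = 1"
proof
  define s where "s = (1 - sum lo J) / (sum hi J - sum lo J)"
  have s: "0 < s" "s < 1"
    using assms(2,3) by (auto simp: s_def field_simps)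
  show "lo j < lo j + s * (hi j - lo j) \<and> lo j + s * (hi j - lo j) < hi j" if "j \<in> J" for j
  proof -
    have "s * (hi j - lo j) < 1 * (hi j - lo j)"
      using s(2) assms(1)[OF that] by (intro mult_strict_right_mono) auto
    moreover have "0 < s * (hi j - lo j)"
      using s(1) assms(1)[OF that] by simp
    ultimately show ?thesis
      by simp
  qed
  have "(\<Sum>j\<in>J. lo j + s * (hi j - lo j)) = sum lo J + s * (sum hi J - sum lo J)"
    by (simp add: sum.distrib sum_subtractf flip: sum_distrib_left)
  also have "\<dots> = 1"
    using assms(2,3) by (simp add: s_def)
  finally show "(\<Sum>j\<in>J. lo j + s * (hi j - lo j)) = 1" .
qed

lemma convex_sum_rays_mem:
  fixes C :: "'a::real_vector set"
  assumes "convex C" "finite J" "sum mu J = 1" "\<And>j. j \<in> J \<Longrightarrow> 0 < mu j"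
    and "\<And>j. j \<in> J \<Longrightarrow> x0 + (t j / mu j) *\<^sub>R r j \<in> C"
  shows "x0 + (\<Sum>j\<in>J. t j *\<^sub>R r j) \<in> C"
proof -
  have "(\<Sum>j\<in>J. mu j *\<^sub>R (x0 + (t j / mu j) *\<^sub>R r j)) \<in> C"
    using assms by (intro convex_sum) (auto intro: less_imp_le)
  also have "(\<Sum>j\<in>J. mu j *\<^sub>R (x0 + (t j / mu j) *\<^sub>R r j)) = (\<Sum>j\<in>J. mu j *\<^sub>R x0 + t j *\<^sub>R r j)"
  proof (rule sum.cong[OF refl])
    fix j assume "j \<in> J"
    then have "mu j \<noteq> 0"
      using assms(4) by force
    then show "mu j *\<^sub>R (x0 + (t j / mu j) *\<^sub>R r j) = mu j *\<^sub>R x0 + t j *\<^sub>R r j"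
      by (simp add: scaleR_add_right)
  qed
  also have "\<dots> = x0 + (\<Sum>j\<in>J. t j *\<^sub>R r j)"
    using assms(3) by (simp add: sum.distrib flip: scaleR_sum_left)
  finally show ?thesis .
qed

lemma zero_mem_recc: "0 \<in> recc C"
  by (simp add: recc_def)

lemma scaleR_mem_recc: "d \<in> recc C \<Longrightarrow> 0 \<le> c \<Longrightarrow> c *\<^sub>R d \<in> recc C"
  by (simp add: recc_def)

lemma add_mem_recc:
  assumes "d1 \<in> recc C" "d2 \<in> recc C"
  shows "d1 + d2 \<in> recc C"
  unfolding recc_def
proof (intro CollectI ballI allI impI)
  fix x and l :: real
  assume "x \<in> C" "0 \<le> l"
  then have "(x + l *\<^sub>R d1) + l *\<^sub>R d2 \<in> C"
    using assms by (simp add: recc_def)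
  then show "x + l *\<^sub>R (d1 + d2) \<in> C"
    by (simp add: scaleR_add_right add.assoc)
qed

lemma sum_mem_recc: "(\<And>j. j \<in> F \<Longrightarrow> d j \<in> recc C) \<Longrightarrow> sum d F \<in> recc C"
  by (induction F rule: infinite_finite_induct) (auto simp: zero_mem_recc add_mem_recc)

lemma add_recc_mem:
  assumes "x \<in> C" "d \<in> recc C"
  shows "x + d \<in> C"
proof -
  have "\<forall>y\<in>C. \<forall>l\<ge>0. y + l *\<^sub>R d \<in> C"
    using assms(2) by (simp add: recc_def)
  then have "x + 1 *\<^sub>R d \<in> C"
    using assms(1) zero_le_one by blast
  then show ?thesis by simp
qed

lemma intersection_cut_violation_mem_active:
  fixes C :: "(real^'n) set" and r :: "'i \<Rightarrow> real^'n"
  assumes "open C" "convex C" "x0 \<notin> closure C" "finite J"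
    and active: "\<And>j. j \<in> J \<Longrightarrow> r j \<noteq> 0 \<and> steps C x0 (r j) \<noteq> {} \<and> 0 < t j"
    and alpha_cut: "1 < (\<Sum>j\<in>J. ediv (t j) (alpha C x0 (r j)))"
    and beta_cut: "(\<Sum>j\<in>J. ediv (t j) (beta C x0 (r j))) < 1"
  shows "x0 + (\<Sum>j\<in>J. t j *\<^sub>R r j) \<in> C"
proof -
  have ray: "0 \<le> ediv (t j) (beta C x0 (r j)) \<and> ediv (t j) (beta C x0 (r j)) < ediv (t j) (alpha C x0 (r j))
      \<and> (\<forall>m. ediv (t j) (beta C x0 (r j)) < m \<and> m < ediv (t j) (alpha C x0 (r j))
             \<longrightarrow> x0 + (t j / m) *\<^sub>R r j \<in> C)" if j: "j \<in> J" for j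
  proof -
    obtain a where a: "0 < a" "alpha C x0 (r j) = ereal a" "alpha C x0 (r j) < beta C x0 (r j)"
      "\<And>l. alpha C x0 (r j) < ereal l \<Longrightarrow> ereal l < beta C x0 (r j) \<Longrightarrow> x0 + l *\<^sub>R r j \<in> C"
      using alpha_beta_nonempty_steps[OF assms(1-3)] active[OF j] by blast
    then show ?thesis
      using ediv_reciprocal_interval[of "t j" a "beta C x0 (r j)"] active[OF j] by auto
  qed
  obtain mu where mu: "\<And>j. j \<in> J \<Longrightarrow> ediv (t j) (beta C x0 (r j)) < mu j \<and> mu j < ediv (t j) (alpha C x0 (r j))"
    "sum mu J = 1"
    using sum_eq_one_between[of J, OF _ beta_cut alpha_cut] ray by blast
  show ?thesis
  proof (rule convex_sum_rays_mem[OF assms(2,4) mu(2)])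
    fix j assume "j \<in> J"
    then show "0 < mu j" "x0 + (t j / mu j) *\<^sub>R r j \<in> C"
      using ray mu(1) by (fastforce, blast)
  qed
qed

lemma intersection_cut_violation_mem:
  fixes C :: "(real^'n) set" and r :: "'i \<Rightarrow> real^'n"
  assumes "open C" "convex C" "x0 \<notin> closure C" "finite N"
    and rays: "\<And>j. j \<in> N \<Longrightarrow> r j \<noteq> 0 \<and> 0 \<le> t j"
    and recc_rays: "\<And>j. j \<in> N \<Longrightarrow> alpha C x0 (r j) = \<infinity> \<and> beta C x0 (r j) = - \<infinity> \<Longrightarrow> r j \<in> recc C"
    and alpha_cut: "1 < (\<Sum>j\<in>N. ediv (t j) (alpha C x0 (r j)))"
    and beta_cut: "(\<Sum>j\<in>N. ediv (t j) (beta C x0 (r j))) < 1"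
  shows "x0 + (\<Sum>j\<in>N. t j *\<^sub>R r j) \<in> C"
proof -
  define J where "J = {j \<in> N. steps C x0 (r j) \<noteq> {} \<and> 0 < t j}"
  have J: "J \<subseteq> N" "finite J"
    using assms(4) by (auto simp: J_def)
  have inactive: "ediv (t j) (alpha C x0 (r j)) = 0 \<and> ediv (t j) (beta C x0 (r j)) = 0
      \<and> t j *\<^sub>R r j \<in> recc C" if "j \<in> N - J" for j
  proof (cases "t j = 0")
    case True
    then show ?thesis by (simp add: zero_mem_recc)
  next
    case False
    have "0 \<le> t j"
      using that rays by blast
    with False that have "steps C x0 (r j) = {}"
      by (auto simp: J_def)
    then have "alpha C x0 (r j) = \<infinity>" "beta C x0 (r j) = - \<infinity>"
      by (rule alpha_beta_empty_steps)+
    moreover from this have "r j \<in> recc C"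
      using recc_rays that by blast
    ultimately show ?thesis
      using \<open>0 \<le> t j\<close> by (simp add: scaleR_mem_recc)
  qed
  have "x0 + (\<Sum>j\<in>J. t j *\<^sub>R r j) \<in> C"
  proof (rule intersection_cut_violation_mem_active[OF assms(1-3) J(2)])
    show "r j \<noteq> 0 \<and> steps C x0 (r j) \<noteq> {} \<and> 0 < t j" if "j \<in> J" for j
      using that rays by (auto simp: J_def)
    have "(\<Sum>j\<in>N. ediv (t j) (alpha C x0 (r j))) = (\<Sum>j\<in>J. ediv (t j) (alpha C x0 (r j)))"
      using inactive by (intro sum.mono_neutral_right[OF assms(4) J(1)]) blast
    with alpha_cut show "1 < (\<Sum>j\<in>J. ediv (t j) (alpha C x0 (r j)))"
      by simp
    have "(\<Sum>j\<in>N. ediv (t j) (beta C x0 (r j))) = (\<Sum>j\<in>J. ediv (t j) (beta C x0 (r j)))"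
      using inactive by (intro sum.mono_neutral_right[OF assms(4) J(1)]) blast
    with beta_cut show "(\<Sum>j\<in>J. ediv (t j) (beta C x0 (r j))) < 1"
      by simp
  qed
  moreover have "(\<Sum>j\<in>N - J. t j *\<^sub>R r j) \<in> recc C"
    using inactive by (intro sum_mem_recc) simp
  ultimately have "x0 + (\<Sum>j\<in>J. t j *\<^sub>R r j) + (\<Sum>j\<in>N - J. t j *\<^sub>R r j) \<in> C"
    by (rule add_recc_mem)
  then show ?thesis
    using sum.subset_diff[OF J(1) assms(4), of "\<lambda>j. t j *\<^sub>R r j"] by (simp add: algebra_simps)
qed

lemma ray_nonzero:
  assumes "j \<notin> B"
  shows "ray B ab j \<noteq> 0"
proof
  assume "ray B ab j = 0"
  then have "ray B ab j $ j = 0" by simp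
  moreover have "ray B ab j $ j = 1"
    using assms by (simp add: ray_def)
  ultimately show False by simp
qed

lemma PB_eq_basic_sol_plus_rays:
  assumes "x \<in> PB B ab bb"
  shows "x = basic_sol B bb + (\<Sum>j\<in>UNIV - B. x $ j *\<^sub>R ray B ab j)"
  unfolding vec_eq_iff
proof
  fix k
  have "(\<Sum>j\<in>UNIV - B. x $ j *\<^sub>R ray B ab j) $ k
      = (if k \<in> B then - (\<Sum>j\<in>UNIV - B. ab k j * x $ j) else x $ k)"
    by (auto simp: ray_def sum_negf mult.commute if_distrib[of "(*) _"] cong: if_cong)
  then show "x $ k = (basic_sol B bb + (\<Sum>j\<in>UNIV - B. x $ j *\<^sub>R ray B ab j)) $ k"
    using assms by (simp add: PB_def basic_sol_def)
qed

theorem theorem1: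
  fixes A :: "real^'n^'m" and b :: "real^'m" and C :: "(real^'n) set"
    and B :: "'n set" and ab :: "'n \<Rightarrow> 'n \<Rightarrow> real" and bb :: "'n \<Rightarrow> real"
  assumes full_rank: "rank A = CARD('m)"
    and C_open: "open C" and C_convex: "convex C"
    and basis: "is_basis A B"
    and bb_nonneg: "\<forall>i\<in>B. 0 \<le> bb i"
    and P_descr: "Pset A b = {x. (\<forall>i\<in>B. x $ i = bb i - (\<Sum>j\<in>UNIV - B. ab i j * x $ j))
                                \<and> (\<forall>j. 0 \<le> x $ j)}"
    and xbar_notin: "basic_sol B bb \<notin> closure C"
    and N0_recc: "\<forall>j\<in>UNIV - B.
          alpha C (basic_sol B bb) (ray B ab j) = \<infinity> \<and> beta C (basic_sol B bb) (ray B ab j) = - \<infinity>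
          \<longrightarrow> ray B ab j \<in> recc C"
  shows "\<forall>x \<in> PB B ab bb - C.
           (\<Sum>j\<in>UNIV - B. ediv (x $ j) (alpha C (basic_sol B bb) (ray B ab j))) \<le> 1
         \<or> (\<Sum>j\<in>UNIV - B. ediv (x $ j) (beta C (basic_sol B bb) (ray B ab j))) \<ge> 1"
proof
  fix x
  assume x: "x \<in> PB B ab bb - C"
  show "(\<Sum>j\<in>UNIV - B. ediv (x $ j) (alpha C (basic_sol B bb) (ray B ab j))) \<le> 1
      \<or> (\<Sum>j\<in>UNIV - B. ediv (x $ j) (beta C (basic_sol B bb) (ray B ab j))) \<ge> 1"
  proof (rule ccontr)
    assume "\<not> ?thesis"
    then have "basic_sol B bb + (\<Sum>j\<in>UNIV - B. x $ j *\<^sub>R ray B ab j) \<in> C"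
      using x N0_recc
      by (intro intersection_cut_violation_mem[OF C_open C_convex xbar_notin])
        (auto simp: PB_def ray_nonzero)
    then show False
      using x PB_eq_basic_sol_plus_rays by force
  qed
qed

end
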